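(* Let $(l_i)$ be a family of pairwise distinct labels indexed by a set containing the finite index sets $I,J$, and let $\sigma_i,\tau_j\in\mathbb{T}$. Then: (1) $\langle l_i:\sigma_i\mid i\in I\rangle\le\langle l_j:\tau_j\mid j\in J\rangle$ iff $J\subseteq I$ and $\sigma_j\le\tau_j$ for all $j\in J$; (2) $\langle l_i:\sigma_i\mid i\in I\rangle\cap\langle l_j:\tau_j\mid j\in J\rangle=\langle l_i:\sigma_i,\ l_j:\tau_j,\ l_k:\sigma_k\cap\tau_k\mid i\in I\setminus J,\ j\in J\setminus I,\ k\in I\cap J\rangle$; (3) $\langle l_i:\sigma_i\mid i\in I\rangle+\langle l_j:\tau_j\mid j\in J\rangle=\langle l_i:\sigma_i,\ l_j:\tau_j\mid i\in I\setminus J,\ j\in J\rangle$; (4) for every $\rho\in\mathbb{T}_R$ there exist finite $I$, distinct labels $l_i$ and types $\sigma_i$ with $\rho=\langle l_i:\sigma_i\mid i\in I\rangle$.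
   Context: $\mathbb{T}\ni\sigma ::= a\mid\omega\mid\sigma_1\to\sigma_2\mid\sigma_1\cap\sigma_2\mid\rho$ and record types $\mathbb{T}_R\ni\rho ::= \langle\rangle\mid\langle l:\sigma\rangle\mid\rho_1+\rho_2\mid\rho_1\cap\rho_2$ ($a$ type constants, $l$ labels). Subtyping $\le$ is the least preorder with: $\sigma\le\omega$; $\omega\le\omega\to\omega$; $\sigma\cap\tau\le\sigma$; $\sigma\cap\tau\le\tau$; $\sigma\le\tau_1,\sigma\le\tau_2\Rightarrow\sigma\le\tau_1\cap\tau_2$; $(\sigma\to\tau_1)\cap(\sigma\to\tau_2)\le\sigma\to\tau_1\cap\tau_2$; $\sigma_2\le\sigma_1,\tau_1\le\tau_2\Rightarrow\sigma_1\to\tau_1\le\sigma_2\to\tau_2$; $\langle l:\sigma\rangle\le\langle\rangle$; $\langle l:\sigma\rangle\cap\langle l:\tau\rangle\le\langle l:\sigma\cap\tau\rangle$; $\sigma\le\tau\Rightarrow\langle l:\sigma\rangle\le\langle l:\tau\rangle$; $\rho+\langle\rangle=\langle\rangle+\rho=\rho$; $(\rho_1+\rho_2)+\rho_3=\rho_1+(\rho_2+\rho_3)$; $(\rho_1\cap\rho_2)+\rho_3=(\rho_1+\rho_3)\cap(\rho_2+\rho_3)$; $\langle l:\sigma\rangle+(\langle l:\tau\rangle\cap\rho)=\langle l:\tau\rangle\cap\rho$; $\langle l:\sigma\rangle+(\langle l':\tau\rangle\cap\rho)=\langle l':\tau\rangle\cap(\langle l:\sigma\rangle+\rho)$ if $l\neq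 l'$; $\rho_1\le\rho_2\Rightarrow\rho_1+\rho\le\rho_2+\rho$; $\rho_1=\rho_2\Rightarrow\rho+\rho_1=\rho+\rho_2$. $\sigma=\tau$ means $\sigma\le\tau$ and $\tau\le\sigma$. Notation: for pairwise distinct labels, $\langle l_i:\sigma_i\mid i\in I\rangle$ stands for $\bigcap_{i\in I}\langle l_i:\sigma_i\rangle$ if $I\neq\emptyset$ and for $\langle\rangle$ if $I=\emptyset$ (intersections taken up to associativity and commutativity). *)

theory Defs
  imports Main
begin

text \<open>Record types and ordinary
types share one datatype; the intersection constructor is shared, so that
rho1 \<inter> rho2 (record) is literally the type intersection of two record types.\<close>
datatype ('a, 'l) ty =
    Atom 'a
  | Omega
  | Arrow "('a, 'l) ty" "('a, 'l) ty"
  | Inter "('a, 'l) ty" "('a, 'l) ty"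
  | REmpty
  | RField 'l "('a, 'l) ty"
  | RPlus "('a, 'l) ty" "('a, 'l) ty"

text \<open>The well-formed types T (tp) and record types T_R (rt).\<close>
inductive tp :: "('a, 'l) ty \<Rightarrow> bool" and rt :: "('a, 'l) ty \<Rightarrow> bool" where
  tp_atom: "tp (Atom a)"
| tp_omega: "tp Omega"
| tp_arrow: "tp s \<Longrightarrow> tp t \<Longrightarrow> tp (Arrow s t)"
| tp_inter: "tp s \<Longrightarrow> tp t \<Longrightarrow> tp (Inter s t)"
| tp_rec: "rt r \<Longrightarrow> tp r"
| rt_empty: "rt REmpty"
| rt_field: "tp s \<Longrightarrow> rt (RField l s)"
| rt_plus: "rt r1 \<Longrightarrow> rt r2 \<Longrightarrow> rt (RPlus r1 r2)"
| rt_inter: "rt r1 \<Longrightarrow> rt r2 \<Longrightarrow> rt (Inter r1 r2)"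

text \<open>Subtyping: the least preorder on T closed under the given rules.
An equation rho = rho' among the axioms stands for both inequalities.\<close>
inductive sub :: "('a, 'l) ty \<Rightarrow> ('a, 'l) ty \<Rightarrow> bool" where
  refl: "tp s \<Longrightarrow> sub s s"
| trans: "sub s t \<Longrightarrow> sub t u \<Longrightarrow> sub s u"
| top: "tp s \<Longrightarrow> sub s Omega"
| omega_arrow: "sub Omega (Arrow Omega Omega)"
| inter_l: "tp s \<Longrightarrow> tp t \<Longrightarrow> sub (Inter s t) s"
| inter_r: "tp s \<Longrightarrow> tp t \<Longrightarrow> sub (Inter s t) t"
| glb: "sub s t1 \<Longrightarrow> sub s t2 \<Longrightarrow> sub s (Inter t1 t2)"
| arrow_inter: "tp s \<Longrightarrow> tp t1 \<Longrightarrow> tp t2 \<Longrightarrow>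
    sub (Inter (Arrow s t1) (Arrow s t2)) (Arrow s (Inter t1 t2))"
| arrow: "sub s2 s1 \<Longrightarrow> sub t1 t2 \<Longrightarrow> sub (Arrow s1 t1) (Arrow s2 t2)"
| field_empty: "tp s \<Longrightarrow> sub (RField l s) REmpty"
| field_inter: "tp s \<Longrightarrow> tp t \<Longrightarrow> sub (Inter (RField l s) (RField l t)) (RField l (Inter s t))"
| field: "sub s t \<Longrightarrow> sub (RField l s) (RField l t)"
| plus_empty_r1: "rt r \<Longrightarrow> sub (RPlus r REmpty) r"
| plus_empty_r2: "rt r \<Longrightarrow> sub r (RPlus r REmpty)"
| plus_empty_l1: "rt r \<Longrightarrow> sub (RPlus REmpty r) r"
| plus_empty_l2: "rt r \<Longrightarrow> sub r (RPlus REmpty r)"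
| plus_assoc1: "rt r1 \<Longrightarrow> rt r2 \<Longrightarrow> rt r3 \<Longrightarrow>
    sub (RPlus (RPlus r1 r2) r3) (RPlus r1 (RPlus r2 r3))"
| plus_assoc2: "rt r1 \<Longrightarrow> rt r2 \<Longrightarrow> rt r3 \<Longrightarrow>
    sub (RPlus r1 (RPlus r2 r3)) (RPlus (RPlus r1 r2) r3)"
| plus_distrib1: "rt r1 \<Longrightarrow> rt r2 \<Longrightarrow> rt r3 \<Longrightarrow>
    sub (RPlus (Inter r1 r2) r3) (Inter (RPlus r1 r3) (RPlus r2 r3))"
| plus_distrib2: "rt r1 \<Longrightarrow> rt r2 \<Longrightarrow> rt r3 \<Longrightarrow>
    sub (Inter (RPlus r1 r3) (RPlus r2 r3)) (RPlus (Inter r1 r2) r3)"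
| plus_override1: "tp s \<Longrightarrow> tp t \<Longrightarrow> rt r \<Longrightarrow>
    sub (RPlus (RField l s) (Inter (RField l t) r)) (Inter (RField l t) r)"
| plus_override2: "tp s \<Longrightarrow> tp t \<Longrightarrow> rt r \<Longrightarrow>
    sub (Inter (RField l t) r) (RPlus (RField l s) (Inter (RField l t) r))"
| plus_swap1: "l \<noteq> l' \<Longrightarrow> tp s \<Longrightarrow> tp t \<Longrightarrow> rt r \<Longrightarrow>
    sub (RPlus (RField l s) (Inter (RField l' t) r)) (Inter (RField l' t) (RPlus (RField l s) r))"
| plus_swap2: "l \<noteq> l' \<Longrightarrow> tp s \<Longrightarrow> tp t \<Longrightarrow> rt r \<Longrightarrow>
    sub (Inter (RField l' t) (RPlus (RField l s) r)) (RPlus (RField l s) (Inter (RField l' t) r))"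
| plus_mono: "sub r1 r2 \<Longrightarrow> rt r1 \<Longrightarrow> rt r2 \<Longrightarrow> rt r \<Longrightarrow> sub (RPlus r1 r) (RPlus r2 r)"
| plus_cong: "sub r1 r2 \<Longrightarrow> sub r2 r1 \<Longrightarrow> rt r \<Longrightarrow> rt r1 \<Longrightarrow> rt r2 \<Longrightarrow>
    sub (RPlus r r1) (RPlus r r2)"

definition eqt :: "('a, 'l) ty \<Rightarrow> ('a, 'l) ty \<Rightarrow> bool" where
  "eqt s t \<longleftrightarrow> sub s t \<and> sub t s"

text \<open>Record notation <l_i : s_i | i in I>: for a nonempty I, an intersection
of single-field records (in some fixed enumeration of I; the order is
immaterial up to =); for I empty, the empty record.\<close>
fun recl :: "('l \<times> ('a, 'l) ty) list \<Rightarrow> ('a, 'l) ty" where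
  "recl [] = REmpty"
| "recl [(l, s)] = RField l s"
| "recl ((l, s) # y # xs) = Inter (RField l s) (recl (y # xs))"

definition rec_of :: "'i set \<Rightarrow> ('i \<Rightarrow> 'l) \<Rightarrow> ('i \<Rightarrow> ('a, 'l) ty) \<Rightarrow> ('a, 'l) ty" where
  "rec_of I l s = recl (map (\<lambda>i. (l i, s i)) (SOME xs. set xs = I \<and> distinct xs))"

end

theory Submission
  imports Defs
begin

text \<open>Read a record type as the partial map from its labels to their types
(\<open>fields\<close>, with \<open>\<inter>\<close> merging common labels and \<open>+\<close> acting as
map override).  Every subtyping axiom is sound for the order ``every field of
the supertype occurs in the subtype with a smaller type'', which gives the
``only if'' of (1).  Conversely a record \<open>\<langle>l\<^sub>i : \<sigma>\<^sub>i\<rangle>\<close> with distinct labels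
is the greatest lower bound of \<open>\<langle>\<rangle>\<close> and its fields, so it is determined up
to \<open>=\<close> by its field map; intersections and sums of such records are computed
field-wise, the sums by induction on the fields using the distributivity,
override and swap axioms.\<close>

lemma sub_tp: "sub s t \<Longrightarrow> tp s \<and> tp t"
  by (induction rule: sub.induct) (auto intro: tp_rt.intros)

lemma rt_induct [consumes 1, case_names REmpty RField RPlus Inter]:
  assumes "rt r"
    and "P REmpty"
    and "\<And>s l. tp s \<Longrightarrow> P (RField l s)"
    and "\<And>r1 r2. rt r1 \<Longrightarrow> P r1 \<Longrightarrow> rt r2 \<Longrightarrow> P r2 \<Longrightarrow> P (RPlus r1 r2)"
    and "\<And>r1 r2. rt r1 \<Longrightarrow> P r1 \<Longrightarrow> rt r2 \<Longrightarrow> P r2 \<Longrightarrow> P (Inter r1 r2)"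
  shows "P r"
  using assms(1) by (induction rule: tp_rt.inducts(2)[where ?P1.0 = "\<lambda>_. True"]) (use assms in auto)

lemma eqt_refl: "tp s \<Longrightarrow> eqt s s"
  by (simp add: eqt_def sub.refl)

lemma eqt_sym: "eqt s t \<Longrightarrow> eqt t s"
  by (simp add: eqt_def)

lemma eqt_trans: "eqt s t \<Longrightarrow> eqt t u \<Longrightarrow> eqt s u"
  unfolding eqt_def by (blast intro: sub.trans)

lemmas [trans] = sub.trans eqt_trans

lemma sub_eqt_trans: "sub s t \<Longrightarrow> eqt t u \<Longrightarrow> sub s u"
  unfolding eqt_def by (blast intro: sub.trans)

lemma sub_Inter_mono:
  assumes "sub s s'" and "sub t t'"
  shows "sub (Inter s t) (Inter s' t')"
proof -
  have "tp s" "tp t" using assms sub_tp by blast+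
  then show ?thesis using assms by (meson sub.glb sub.trans sub.inter_l sub.inter_r)
qed

lemma eqt_Inter: "eqt s s' \<Longrightarrow> eqt t t' \<Longrightarrow> eqt (Inter s t) (Inter s' t')"
  unfolding eqt_def by (blast intro: sub_Inter_mono)

lemma sub_RPlus_mono:
  "sub r1 r1' \<Longrightarrow> eqt r2 r2' \<Longrightarrow> rt r1 \<Longrightarrow> rt r1' \<Longrightarrow> rt r2 \<Longrightarrow> rt r2'
    \<Longrightarrow> sub (RPlus r1 r2) (RPlus r1' r2')"
  unfolding eqt_def by (meson sub.trans sub.plus_mono sub.plus_cong)

lemma sub_RPlus_cong: "eqt r1 r2 \<Longrightarrow> rt r \<Longrightarrow> rt r1 \<Longrightarrow> rt r2 \<Longrightarrow> sub (RPlus r r1) (RPlus r r2)"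
  unfolding eqt_def by (blast intro: sub.plus_cong)

lemma eqt_RPlus:
  "eqt r1 r1' \<Longrightarrow> eqt r2 r2' \<Longrightarrow> rt r1 \<Longrightarrow> rt r1' \<Longrightarrow> rt r2 \<Longrightarrow> rt r2'
    \<Longrightarrow> eqt (RPlus r1 r2) (RPlus r1' r2')"
  by (meson eqt_def eqt_sym sub_RPlus_mono)

definition map_inter :: "('k \<rightharpoonup> ('a, 'l) ty) \<Rightarrow> ('k \<rightharpoonup> ('a, 'l) ty) \<Rightarrow> 'k \<rightharpoonup> ('a, 'l) ty" where
  "map_inter f g k = (case (f k, g k) of
      (None, v) \<Rightarrow> v
    | (Some s, None) \<Rightarrow> Some s
    | (Some s, Some t) \<Rightarrow> Some (Inter s t))"

fun fields :: "('a, 'l) ty \<Rightarrow> 'l \<rightharpoonup> ('a, 'l) ty" where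
  "fields (RField l s) = [l \<mapsto> s]"
| "fields (Inter r1 r2) = map_inter (fields r1) (fields r2)"
| "fields (RPlus r1 r2) = fields r1 ++ fields r2"
| "fields _ = Map.empty"

definition tp_map :: "('k \<rightharpoonup> ('a, 'l) ty) \<Rightarrow> bool" where
  "tp_map m \<longleftrightarrow> (\<forall>k s. m k = Some s \<longrightarrow> tp s)"

lemma tp_map_map_add: "tp_map f \<Longrightarrow> tp_map g \<Longrightarrow> tp_map (f ++ g)"
  by (auto simp: tp_map_def map_add_Some_iff)

lemma tp_map_map_inter: "tp_map f \<Longrightarrow> tp_map g \<Longrightarrow> tp_map (map_inter f g)"
  by (auto simp: tp_map_def map_inter_def intro: tp_inter split: option.splits)

lemma dom_map_inter: "dom (map_inter f g) = dom f \<union> dom g"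
  by (auto simp: map_inter_def split: option.splits)

lemma tp_map_fields:
  fixes t r :: "('a, 'l) ty"
  shows "tp t \<Longrightarrow> tp_map (fields t)" and "rt r \<Longrightarrow> tp_map (fields r)"
  unfolding tp_map_def
  by (induction t and r rule: tp_rt.inducts)
     (auto simp: map_inter_def map_add_Some_iff intro: tp_rt.intros split: option.splits)

definition fields_le :: "('l \<rightharpoonup> ('a, 'l) ty) \<Rightarrow> ('l \<rightharpoonup> ('a, 'l) ty) \<Rightarrow> bool" where
  "fields_le m m' \<longleftrightarrow> (\<forall>l t. m' l = Some t \<longrightarrow> (\<exists>s. m l = Some s \<and> sub s t))"

lemma fields_le_refl: "tp_map m \<Longrightarrow> fields_le m m"
  by (auto simp: fields_le_def tp_map_def intro: sub.refl)

lemma fields_le_trans: "fields_le m1 m2 \<Longrightarrow> fields_le m2 m3 \<Longrightarrow> fields_le m1 m3"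
  unfolding fields_le_def by (meson sub.trans)

lemma fields_le_empty: "fields_le m Map.empty"
  by (simp add: fields_le_def)

lemma fields_le_map_inter1: "tp_map f \<Longrightarrow> tp_map g \<Longrightarrow> fields_le (map_inter f g) f"
  unfolding fields_le_def tp_map_def map_inter_def
  by (auto intro: sub.refl sub.inter_l split: option.splits)

lemma fields_le_map_inter2: "tp_map f \<Longrightarrow> tp_map g \<Longrightarrow> fields_le (map_inter f g) g"
  unfolding fields_le_def tp_map_def map_inter_def
  by (auto intro: sub.refl sub.inter_r split: option.splits)

lemma fields_le_map_add2: "tp_map g \<Longrightarrow> fields_le (f ++ g) g"
  by (auto simp: fields_le_def tp_map_def intro: sub.refl)

lemma fields_le_map_inter_glb: "fields_le h f \<Longrightarrow> fields_le h g \<Longrightarrow> fields_le h (map_inter f g)"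
  unfolding fields_le_def map_inter_def by (fastforce intro: sub.glb split: option.splits)

lemma fields_le_map_add_mono: "fields_le f g \<Longrightarrow> tp_map h \<Longrightarrow> fields_le (f ++ h) (g ++ h)"
  unfolding fields_le_def tp_map_def map_add_def by (fastforce intro: sub.refl split: option.splits)

lemma fields_le_map_add_cong:
  "fields_le g g' \<Longrightarrow> fields_le g' g \<Longrightarrow> tp_map h \<Longrightarrow> fields_le (h ++ g) (h ++ g')"
  unfolding fields_le_def tp_map_def map_add_def by (fastforce intro: sub.refl split: option.splits)

lemma fields_le_map_add_distrib1:
  "tp_map f \<Longrightarrow> tp_map g \<Longrightarrow> tp_map h \<Longrightarrow>
    fields_le (map_inter f g ++ h) (map_inter (f ++ h) (g ++ h))"
  unfolding fields_le_def tp_map_def map_add_def map_inter_def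
  by (fastforce intro: sub.refl sub.glb sub.inter_l sub.inter_r tp_inter split: option.splits)

lemma fields_le_map_add_distrib2:
  "tp_map f \<Longrightarrow> tp_map g \<Longrightarrow> tp_map h \<Longrightarrow>
    fields_le (map_inter (f ++ h) (g ++ h)) (map_inter f g ++ h)"
  unfolding fields_le_def tp_map_def map_add_def map_inter_def
  by (fastforce intro: sub.refl sub.glb sub.inter_l sub.inter_r tp_inter split: option.splits)

lemma map_inter_singleton: "map_inter [l \<mapsto> s] [l \<mapsto> t] = [l \<mapsto> Inter s t]"
  by (simp add: map_inter_def fun_eq_iff)

lemma map_add_map_inter_override: "[l \<mapsto> s] ++ map_inter [l \<mapsto> t] m = map_inter [l \<mapsto> t] m"
  by (auto simp: map_add_def map_inter_def fun_eq_iff split: option.splits)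

lemma map_add_map_inter_swap:
  "l \<noteq> l' \<Longrightarrow> [l \<mapsto> s] ++ map_inter [l' \<mapsto> t] m = map_inter [l' \<mapsto> t] ([l \<mapsto> s] ++ m)"
  by (auto simp: map_add_def map_inter_def fun_eq_iff split: option.splits)

lemma sub_fields: "sub r r' \<Longrightarrow> fields_le (fields r) (fields r')"
proof (induction rule: sub.induct)
  case (trans s t u)
  then show ?case by (blast intro: fields_le_trans)
next
  case (glb s t1 t2)
  then show ?case by (simp add: fields_le_map_inter_glb)
next
  case (field s t l)
  then show ?case by (simp add: fields_le_def)
next
  case (field_inter s t l)
  then show ?case by (auto simp: map_inter_singleton fields_le_def intro: sub.refl tp_inter)
next
  case (plus_override1 s t r l)
  then show ?case using fields_le_refl[OF tp_map_fields(1), of "Inter (RField l t) r"]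
    by (simp add: map_add_map_inter_override tp_rt.intros)
next
  case (plus_override2 s t r l)
  then show ?case using fields_le_refl[OF tp_map_fields(1), of "Inter (RField l t) r"]
    by (simp add: map_add_map_inter_override tp_rt.intros)
next
  case (plus_swap1 l l' s t r)
  then show ?case
    using fields_le_refl[OF tp_map_fields(1), of "Inter (RField l' t) (RPlus (RField l s) r)"]
    by (simp add: map_add_map_inter_swap tp_rt.intros)
next
  case (plus_swap2 l l' s t r)
  then show ?case
    using fields_le_refl[OF tp_map_fields(1), of "Inter (RField l' t) (RPlus (RField l s) r)"]
    by (simp add: map_add_map_inter_swap tp_rt.intros)
qed (simp_all add: tp_map_fields tp_rt.intros fields_le_refl fields_le_empty
    fields_le_map_inter1 fields_le_map_inter2 fields_le_map_add_mono fields_le_map_add_cong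
    fields_le_map_add_distrib1 fields_le_map_add_distrib2)

lemma tp_map_map_of: "\<forall>(l, s)\<in>set xs. tp s \<Longrightarrow> tp_map (map_of xs)"
  by (auto simp: tp_map_def dest: map_of_SomeD)

lemma rt_recl: "\<forall>(l, s)\<in>set xs. tp s \<Longrightarrow> rt (recl xs)"
  by (induction xs rule: recl.induct) (auto intro: tp_rt.intros)

lemma tp_recl: "\<forall>(l, s)\<in>set xs. tp s \<Longrightarrow> tp (recl xs)"
  by (simp add: rt_recl tp_rec)

lemma fields_recl: "distinct (map fst xs) \<Longrightarrow> fields (recl xs) = map_of xs"
proof (induction xs rule: recl.induct)
  case (3 l s y xs)
  then have "map_of (y # xs) l = None" by (auto simp: map_of_eq_None_iff)
  with 3 show ?case by (auto simp: map_inter_def fun_eq_iff split: option.splits)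
qed auto

lemma recl_le_RField: "\<forall>(l, s)\<in>set xs. tp s \<Longrightarrow> (l, s) \<in> set xs \<Longrightarrow> sub (recl xs) (RField l s)"
proof (induction xs rule: recl.induct)
  case (3 l' s' y xs)
  have "tp (RField l' s')" "tp (recl (y # xs))"
    using "3.prems"(1) by (simp_all add: tp_recl tp_rt.intros)
  then show ?case using 3 by (auto intro: sub.trans sub.inter_l sub.inter_r sub.refl)
qed (auto intro: sub.refl tp_rt.intros)

lemma recl_le_REmpty: "\<forall>(l, s)\<in>set xs. tp s \<Longrightarrow> sub (recl xs) REmpty"
proof (induction xs rule: recl.induct)
  case (3 l s y xs)
  have "tp (RField l s)" "tp (recl (y # xs))"
    using "3.prems" by (simp_all add: tp_recl tp_rt.intros)
  then show ?case using 3 by (auto intro: sub.trans sub.inter_r)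
qed (auto intro: sub.refl sub.field_empty tp_rt.intros)

lemma le_recl: "sub w REmpty \<Longrightarrow> \<forall>(l, t)\<in>set ys. sub w (RField l t) \<Longrightarrow> sub w (recl ys)"
  by (induction ys rule: recl.induct) (auto intro: sub.glb)

lemma recl_le_recl:
  assumes "\<forall>(l, s)\<in>set xs. tp s" and "distinct (map fst ys)"
    and "fields_le (map_of xs) (map_of ys)"
  shows "sub (recl xs) (recl ys)"
proof (rule le_recl)
  show "sub (recl xs) REmpty" using assms(1) by (rule recl_le_REmpty)
  show "\<forall>(l, t)\<in>set ys. sub (recl xs) (RField l t)"
  proof clarify
    fix l t assume "(l, t) \<in> set ys"
    then have "map_of ys l = Some t" using assms(2) by simp
    then obtain s where "map_of xs l = Some s" "sub s t"
      using assms(3) by (auto simp: fields_le_def)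
    then have "sub (recl xs) (RField l s)"
      using assms(1) by (auto intro: recl_le_RField map_of_SomeD)
    then show "sub (recl xs) (RField l t)" using \<open>sub s t\<close> by (meson sub.field sub.trans)
  qed
qed

lemma recl_le_recl_iff:
  assumes "\<forall>(l, s)\<in>set xs. tp s" and "distinct (map fst xs)" and "distinct (map fst ys)"
  shows "sub (recl xs) (recl ys) \<longleftrightarrow> fields_le (map_of xs) (map_of ys)"
  using sub_fields recl_le_recl[OF assms(1,3)] fields_recl assms(2,3) by metis

lemma recl_eqt:
  assumes "\<forall>(l, s)\<in>set xs. tp s" "\<forall>(l, s)\<in>set ys. tp s"
    and "distinct (map fst xs)" "distinct (map fst ys)" and "map_of xs = map_of ys"
  shows "eqt (recl xs) (recl ys)"
  using assms by (simp add: eqt_def recl_le_recl fields_le_refl tp_map_map_of)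

lemma recl_Inter:
  assumes xs: "\<forall>(l, s)\<in>set xs. tp s" and ys: "\<forall>(l, s)\<in>set ys. tp s" and zs: "\<forall>(l, s)\<in>set zs. tp s"
    and "distinct (map fst xs)" "distinct (map fst ys)" "distinct (map fst zs)"
    and zs_eq: "map_of zs = map_inter (map_of xs) (map_of ys)"
  shows "eqt (Inter (recl xs) (recl ys)) (recl zs)"
proof -
  let ?w = "Inter (recl xs) (recl ys)"
  have "tp (recl xs)" "tp (recl ys)" using xs ys by (simp_all add: tp_recl)
  then have wx: "sub ?w (recl xs)" and wy: "sub ?w (recl ys)"
    by (rule sub.inter_l, rule sub.inter_r)
  have "sub ?w (RField l t)" if "(l, t) \<in> set zs" for l t
  proof -
    have "map_inter (map_of xs) (map_of ys) l = Some t"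
      using that zs_eq \<open>distinct (map fst zs)\<close> by (metis map_of_is_SomeI)
    then consider (x) "map_of xs l = Some t"
      | (y) "map_of ys l = Some t"
      | (xy) s u where "map_of xs l = Some s" "map_of ys l = Some u" "t = Inter s u"
      by (auto simp: map_inter_def split: option.splits)
    then show ?thesis
    proof cases
      case x
      then show ?thesis using wx recl_le_RField[OF xs] by (blast intro: sub.trans map_of_SomeD)
    next
      case y
      then show ?thesis using wy recl_le_RField[OF ys] by (blast intro: sub.trans map_of_SomeD)
    next
      case xy
      have "sub ?w (Inter (RField l s) (RField l u))"
        using wx wy recl_le_RField[OF xs] recl_le_RField[OF ys] xy(1,2)
        by (meson sub.glb sub.trans map_of_SomeD)
      moreover have "tp s" "tp u" using xs ys xy(1,2) by (auto dest: map_of_SomeD)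
      ultimately show ?thesis using xy(3) by (meson sub.field_inter sub.trans)
    qed
  qed
  then have "sub ?w (recl zs)"
    using wx recl_le_REmpty[OF xs] by (auto intro: le_recl sub.trans)
  moreover have "sub (recl zs) (recl xs)" "sub (recl zs) (recl ys)"
    using assms
    by (simp_all add: recl_le_recl fields_le_map_inter1 fields_le_map_inter2 tp_map_map_of)
  ultimately show ?thesis by (simp add: eqt_def sub.glb)
qed

text \<open>This hides the special treatment of singleton lists in \<open>recl\<close>, so that
inductions over the fields need only the cases \<open>Nil\<close> and \<open>Cons\<close>.\<close>

lemma recl_Cons_eqt:
  assumes "tp s" and "\<forall>(l, s)\<in>set xs. tp s"
  shows "eqt (recl ((l, s) # xs)) (Inter (RField l s) (recl xs))"
proof (cases xs)
  case Nil
  have "tp (RField l s)" using assms(1) by (simp add: tp_rt.intros)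
  with assms(1) show ?thesis
    by (simp add: Nil eqt_def sub.glb sub.refl sub.field_empty sub.inter_l tp_rt.intros)
next
  case (Cons y ys)
  then show ?thesis using assms by (simp add: eqt_refl tp_recl tp_rt.intros)
qed

lemma RPlus_RField_le_absent:
  assumes "tp t" and "\<forall>(l, s)\<in>set ys. tp s" and "l \<notin> fst ` set ys"
  shows "sub (RPlus (RField l t) (recl ys)) (RField l t)"
  using assms(2,3)
proof (induction ys)
  case Nil
  show ?case using assms(1) by (simp add: sub.plus_empty_r1 tp_rt.intros)
next
  case (Cons p ys)
  obtain l' u where p: "p = (l', u)" by (cases p)
  let ?T = "RField l t" and ?F = "RField l' u" and ?Y = "recl ys"
  have "tp u" "rt ?T" "rt ?F" "rt ?Y" "rt (recl (p # ys))" "l \<noteq> l'"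
    using Cons.prems assms(1) p by (simp_all add: tp_rt.intros rt_recl)
  have "eqt (recl (p # ys)) (Inter ?F ?Y)" using Cons.prems p by (simp add: recl_Cons_eqt)
  then have "sub (RPlus ?T (recl (p # ys))) (RPlus ?T (Inter ?F ?Y))"
    using \<open>rt ?T\<close> \<open>rt (recl (p # ys))\<close> \<open>rt ?F\<close> \<open>rt ?Y\<close> by (simp add: sub_RPlus_cong tp_rt.intros)
  also have "sub \<dots> (Inter ?F (RPlus ?T ?Y))"
    using \<open>l \<noteq> l'\<close> \<open>tp t\<close> \<open>tp u\<close> \<open>rt ?Y\<close> by (rule sub.plus_swap1)
  also have "sub \<dots> (RPlus ?T ?Y)"
    using \<open>rt ?T\<close> \<open>rt ?F\<close> \<open>rt ?Y\<close> by (simp add: sub.inter_r tp_rt.intros)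
  also have "sub \<dots> ?T" using Cons by simp
  finally show ?case .
qed

lemma le_RPlus_RField:
  assumes "tp t" and "\<forall>(l, s)\<in>set ys. tp s"
    and "sub w (recl ys)" and "l \<notin> fst ` set ys \<Longrightarrow> sub w (RField l t)"
  shows "sub w (RPlus (RField l t) (recl ys))"
  using assms(2-4)
proof (induction ys)
  case Nil
  then have "sub w (RField l t)" by simp
  then show ?case
    using sub.plus_empty_r2[OF rt_field[OF assms(1)], of l] by (metis recl.simps(1) sub.trans)
next
  case (Cons p ys)
  obtain l' u where p: "p = (l', u)" by (cases p)
  let ?T = "RField l t" and ?F = "RField l' u" and ?Y = "recl ys"
  have "tp u" "rt ?T" "rt ?F" "rt ?Y" "rt (recl (p # ys))"
    using Cons.prems assms(1) p by (simp_all add: tp_rt.intros rt_recl)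
  have cons_eqt: "eqt (recl (p # ys)) (Inter ?F ?Y)" using Cons.prems p by (simp add: recl_Cons_eqt)
  then have w: "sub w (Inter ?F ?Y)" using Cons.prems(2) by (simp add: sub_eqt_trans)
  have "sub w (RPlus ?T (Inter ?F ?Y))"
  proof (cases "l = l'")
    case True
    have "sub (Inter ?F ?Y) (RPlus ?T (Inter ?F ?Y))"
      using sub.plus_override2[OF \<open>tp t\<close> \<open>tp u\<close> \<open>rt ?Y\<close>, of l'] True by simp
    with w show ?thesis by (rule sub.trans)
  next
    case False
    have "tp ?F" "tp ?Y" using \<open>rt ?F\<close> \<open>rt ?Y\<close> by (simp_all add: tp_rec)
    then have "sub w ?F" "sub w ?Y"
      using w sub.inter_l sub.inter_r sub.trans by blast+
    moreover have "sub w (RPlus ?T ?Y)"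
      by (rule Cons.IH) (use Cons.prems p False \<open>sub w ?Y\<close> in auto)
    ultimately have "sub w (Inter ?F (RPlus ?T ?Y))" by (blast intro: sub.glb)
    also have "sub \<dots> (RPlus ?T (Inter ?F ?Y))"
      using False \<open>tp t\<close> \<open>tp u\<close> \<open>rt ?Y\<close> by (rule sub.plus_swap2)
    finally show ?thesis .
  qed
  also have "sub \<dots> (RPlus ?T (recl (p # ys)))"
    using eqt_sym[OF cons_eqt] \<open>rt ?T\<close> rt_inter[OF \<open>rt ?F\<close> \<open>rt ?Y\<close>] \<open>rt (recl (p # ys))\<close>
    by (rule sub_RPlus_cong)
  finally show ?case .
qed

lemma le_RPlus_recl:
  assumes "\<forall>(l, s)\<in>set xs. tp s" and "\<forall>(l, s)\<in>set ys. tp s"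
    and "sub w (recl ys)" and "\<forall>(l, s)\<in>set xs. l \<notin> fst ` set ys \<longrightarrow> sub w (RField l s)"
  shows "sub w (RPlus (recl xs) (recl ys))"
  using assms(1,4)
proof (induction xs)
  case Nil
  have "rt (recl ys)" using assms(2) by (rule rt_recl)
  then show ?case using assms(3) sub.plus_empty_l2 by (metis recl.simps(1) sub.trans)
next
  case (Cons p xs)
  obtain l s where p: "p = (l, s)" by (cases p)
  let ?T = "RField l s" and ?X = "recl xs" and ?Y = "recl ys"
  have "tp s" "rt ?T" "rt ?X" "rt ?Y" "rt (recl (p # xs))"
    using Cons.prems assms(2) p by (simp_all add: tp_rt.intros rt_recl)
  have "sub w (RPlus ?T ?Y)"
    using le_RPlus_RField[OF \<open>tp s\<close> assms(2,3)] Cons.prems(2) p by simp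
  moreover have "sub w (RPlus ?X ?Y)" using Cons by simp
  ultimately have "sub w (Inter (RPlus ?T ?Y) (RPlus ?X ?Y))" by (rule sub.glb)
  also have "sub \<dots> (RPlus (Inter ?T ?X) ?Y)"
    using \<open>rt ?T\<close> \<open>rt ?X\<close> \<open>rt ?Y\<close> by (rule sub.plus_distrib2)
  also have "sub \<dots> (RPlus (recl (p # xs)) ?Y)"
  proof (rule sub.plus_mono)
    show "sub (Inter ?T ?X) (recl (p # xs))"
      using recl_Cons_eqt[OF \<open>tp s\<close>] Cons.prems(1) p by (simp add: eqt_def)
  qed (use \<open>rt ?T\<close> \<open>rt ?X\<close> \<open>rt ?Y\<close> \<open>rt (recl (p # xs))\<close> in \<open>simp_all add: rt_inter\<close>)
  finally show ?case .
qed

lemma RPlus_recl_le_recl: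
  assumes xs: "\<forall>(l, s)\<in>set xs. tp s" and ys: "\<forall>(l, s)\<in>set ys. tp s"
    and "distinct (map fst zs)" and zs_eq: "map_of zs = map_of xs ++ map_of ys"
  shows "sub (RPlus (recl xs) (recl ys)) (recl zs)"
proof -
  let ?X = "recl xs" and ?Y = "recl ys"
  have "rt ?X" "rt ?Y" using xs ys by (simp_all add: rt_recl)
  have "sub (RPlus ?X ?Y) (RPlus REmpty ?Y)"
    using recl_le_REmpty[OF xs] \<open>rt ?X\<close> \<open>rt ?Y\<close> by (simp add: sub.plus_mono rt_empty)
  also have "sub \<dots> ?Y" using \<open>rt ?Y\<close> by (rule sub.plus_empty_l1)
  finally have plus_le_Y: "sub (RPlus ?X ?Y) ?Y" .
  have "sub (RPlus ?X ?Y) (RField l t)" if "(l, t) \<in> set zs" for l t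
  proof -
    have "map_of zs l = Some t" using that \<open>distinct (map fst zs)\<close> by simp
    then consider (y) "map_of ys l = Some t" | (x) "map_of ys l = None" "map_of xs l = Some t"
      using zs_eq by (auto simp: map_add_Some_iff)
    then show ?thesis
    proof cases
      case y
      then show ?thesis
        using plus_le_Y recl_le_RField[OF ys] by (blast intro: sub.trans map_of_SomeD)
    next
      case x
      have "tp t" using xs x(2) by (auto dest: map_of_SomeD)
      have "sub (RPlus ?X ?Y) (RPlus (RField l t) ?Y)"
        using recl_le_RField[OF xs map_of_SomeD[OF x(2)]] \<open>tp t\<close> \<open>rt ?X\<close> \<open>rt ?Y\<close>
        by (simp add: sub.plus_mono rt_field)
      also have "sub \<dots> (RField l t)"
        using RPlus_RField_le_absent[OF \<open>tp t\<close> ys] x(1) by (simp add: map_of_eq_None_iff)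
      finally show ?thesis .
    qed
  qed
  then show ?thesis using plus_le_Y recl_le_REmpty[OF ys] by (auto intro: le_recl sub.trans)
qed

lemma recl_RPlus:
  assumes xs: "\<forall>(l, s)\<in>set xs. tp s" and ys: "\<forall>(l, s)\<in>set ys. tp s" and zs: "\<forall>(l, s)\<in>set zs. tp s"
    and "distinct (map fst xs)" "distinct (map fst ys)" "distinct (map fst zs)"
    and zs_eq: "map_of zs = map_of xs ++ map_of ys"
  shows "eqt (RPlus (recl xs) (recl ys)) (recl zs)"
proof -
  have "sub (recl zs) (RPlus (recl xs) (recl ys))"
  proof (rule le_RPlus_recl[OF xs ys])
    show "sub (recl zs) (recl ys)"
      using assms by (simp add: recl_le_recl fields_le_map_add2 tp_map_map_of)
    show "\<forall>(l, s)\<in>set xs. l \<notin> fst ` set ys \<longrightarrow> sub (recl zs) (RField l s)"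
    proof clarify
      fix l s assume "(l, s) \<in> set xs" "l \<notin> fst ` set ys"
      moreover have "map_of ys l = None" using \<open>l \<notin> fst ` set ys\<close> by (simp add: map_of_eq_None_iff)
      ultimately have "map_of zs l = Some s"
        using zs_eq \<open>distinct (map fst xs)\<close> by (simp add: map_add_def)
      then show "sub (recl zs) (RField l s)" using zs by (blast intro: recl_le_RField map_of_SomeD)
    qed
  qed
  with RPlus_recl_le_recl[OF xs ys \<open>distinct (map fst zs)\<close> zs_eq] show ?thesis
    by (simp add: eqt_def)
qed

lemma finite_tp_map_eq_map_of:
  assumes "finite (dom m)" and "tp_map m"
  obtains zs where "\<forall>(l, s)\<in>set zs. tp s" "distinct (map fst zs)" "map_of zs = m"
proof -
  obtain ks where ks: "set ks = dom m" "distinct ks"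
    using finite_distinct_list[OF assms(1)] by blast
  let ?zs = "map (\<lambda>k. (k, the (m k))) ks"
  have "map_of ?zs = m" using ks(1) by (rule map_of_map_keys)
  moreover have "\<forall>(l, s)\<in>set ?zs. tp s" using ks(1) assms(2) by (auto simp: tp_map_def)
  ultimately show ?thesis using ks(2) by (intro that) (simp_all add: comp_def)
qed

lemma rt_eqt_recl:
  "rt r \<Longrightarrow> \<exists>zs. (\<forall>(l, s)\<in>set zs. tp s) \<and> distinct (map fst zs) \<and> eqt r (recl zs)"
proof (induction rule: rt_induct)
  case REmpty
  have "eqt REmpty (recl [])" by (simp add: eqt_refl tp_rt.intros)
  then show ?case by (intro exI[of _ "[]"]) simp
next
  case (RField s l)
  then have "eqt (RField l s) (recl [(l, s)])" by (simp add: eqt_refl tp_rt.intros)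
  then show ?case using RField by (intro exI[of _ "[(l, s)]"]) simp
next
  case (RPlus r1 r2)
  then obtain z1 z2 where z1: "\<forall>(l, s)\<in>set z1. tp s" "distinct (map fst z1)" "eqt r1 (recl z1)"
    and z2: "\<forall>(l, s)\<in>set z2. tp s" "distinct (map fst z2)" "eqt r2 (recl z2)" by blast
  obtain zs where zs: "\<forall>(l, s)\<in>set zs. tp s" "distinct (map fst zs)"
      "map_of zs = map_of z1 ++ map_of z2"
    by (rule finite_tp_map_eq_map_of[of "map_of z1 ++ map_of z2"])
      (simp_all add: finite_dom_map_of tp_map_map_of tp_map_map_add z1(1) z2(1))
  have "eqt (RPlus r1 r2) (RPlus (recl z1) (recl z2))"
    using RPlus z1 z2 by (simp add: eqt_RPlus rt_recl)
  also have "eqt \<dots> (recl zs)" using z1 z2 zs by (simp add: recl_RPlus)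
  finally show ?case using zs by blast
next
  case (Inter r1 r2)
  then obtain z1 z2 where z1: "\<forall>(l, s)\<in>set z1. tp s" "distinct (map fst z1)" "eqt r1 (recl z1)"
    and z2: "\<forall>(l, s)\<in>set z2. tp s" "distinct (map fst z2)" "eqt r2 (recl z2)" by blast
  obtain zs where zs: "\<forall>(l, s)\<in>set zs. tp s" "distinct (map fst zs)"
      "map_of zs = map_inter (map_of z1) (map_of z2)"
    by (rule finite_tp_map_eq_map_of[of "map_inter (map_of z1) (map_of z2)"])
      (simp_all add: dom_map_inter finite_dom_map_of tp_map_map_of tp_map_map_inter z1(1) z2(1))
  have "eqt (Inter r1 r2) (Inter (recl z1) (recl z2))"
    using z1 z2 by (simp add: eqt_Inter)
  also have "eqt \<dots> (recl zs)" using z1 z2 zs by (simp add: recl_Inter)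
  finally show ?case using zs by blast
qed

definition field_map :: "'i set \<Rightarrow> ('i \<Rightarrow> 'l) \<Rightarrow> ('i \<Rightarrow> ('a, 'l) ty) \<Rightarrow> 'l \<rightharpoonup> ('a, 'l) ty" where
  "field_map I l s x = (if x \<in> l ` I then Some (s (inv_into I l x)) else None)"

lemma map_of_eq_field_map:
  assumes "distinct ks" and "inj_on l (set ks)"
  shows "map_of (map (\<lambda>i. (l i, s i)) ks) = field_map (set ks) l s"
proof
  fix x
  have "distinct (map fst (map (\<lambda>i. (l i, s i)) ks))"
    using assms by (simp add: comp_def distinct_map)
  then show "map_of (map (\<lambda>i. (l i, s i)) ks) x = field_map (set ks) l s x"
    using assms(2) by (auto simp: field_map_def map_of_eq_None_iff image_image)
qed

lemma field_map_image:
  assumes "inj_on l U" and "I \<subseteq> U" and "k \<in> U"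
  shows "field_map I l s (l k) = (if k \<in> I then Some (s k) else None)"
  using assms by (auto simp: field_map_def inj_on_image_mem_iff inv_into_f_f inj_on_subset)

lemma field_map_outside: "x \<notin> l ` I \<Longrightarrow> field_map I l s x = None"
  by (simp add: field_map_def)

lemma fields_le_field_map_iff:
  assumes "inj_on l (I \<union> J)"
  shows "fields_le (field_map I l \<sigma>) (field_map J l \<tau>) \<longleftrightarrow> J \<subseteq> I \<and> (\<forall>j\<in>J. sub (\<sigma> j) (\<tau> j))"
proof
  assume le: "fields_le (field_map I l \<sigma>) (field_map J l \<tau>)"
  have "j \<in> I \<and> sub (\<sigma> j) (\<tau> j)" if "j \<in> J" for j
  proof -
    have "field_map J l \<tau> (l j) = Some (\<tau> j)" using assms that by (simp add: field_map_image)
    then obtain s where "field_map I l \<sigma> (l j) = Some s" "sub s (\<tau> j)"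
      using le by (auto simp: fields_le_def)
    then show ?thesis using assms that by (simp add: field_map_image split: if_splits)
  qed
  then show "J \<subseteq> I \<and> (\<forall>j\<in>J. sub (\<sigma> j) (\<tau> j))" by blast
next
  assume J: "J \<subseteq> I \<and> (\<forall>j\<in>J. sub (\<sigma> j) (\<tau> j))"
  show "fields_le (field_map I l \<sigma>) (field_map J l \<tau>)"
    unfolding fields_le_def
  proof (intro allI impI)
    fix x t assume x: "field_map J l \<tau> x = Some t"
    then obtain j where "j \<in> J" "x = l j" by (metis field_map_outside imageE option.distinct(1))
    with x J assms show "\<exists>s. field_map I l \<sigma> x = Some s \<and> sub s t"
      by (auto simp: field_map_image)
  qed
qed

lemma map_inter_field_map:
  assumes "inj_on l (I \<union> J)"
  shows "map_inter (field_map I l \<sigma>) (field_map J l \<tau>) = field_map (I \<union> J) l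
    (\<lambda>k. if k \<in> I - J then \<sigma> k else if k \<in> J - I then \<tau> k else Inter (\<sigma> k) (\<tau> k))"
    (is "?f = ?g")
proof
  fix x
  show "?f x = ?g x"
  proof (cases "x \<in> l ` (I \<union> J)")
    case True
    then obtain k where "k \<in> I \<union> J" "x = l k" by blast
    then show ?thesis using assms by (auto simp: field_map_image map_inter_def)
  next
    case False
    then show ?thesis by (simp add: field_map_outside map_inter_def image_Un)
  qed
qed

lemma map_add_field_map:
  assumes "inj_on l (I \<union> J)"
  shows "field_map I l \<sigma> ++ field_map J l \<tau> = field_map (I \<union> J) l (\<lambda>k. if k \<in> J then \<tau> k else \<sigma> k)"
    (is "?f = ?g")
proof
  fix x
  show "?f x = ?g x"
  proof (cases "x \<in> l ` (I \<union> J)")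
    case True
    then obtain k where "k \<in> I \<union> J" "x = l k" by blast
    then show ?thesis using assms by (auto simp: field_map_image map_add_def)
  next
    case False
    then show ?thesis by (simp add: field_map_outside map_add_def image_Un)
  qed
qed

lemma rec_of_eq_recl:
  assumes "finite I" and "inj_on l I" and "\<forall>i\<in>I. tp (s i)"
  obtains xs where "rec_of I l s = recl xs" "\<forall>(l, s)\<in>set xs. tp s"
    "distinct (map fst xs)" "map_of xs = field_map I l s"
proof -
  let ?ks = "SOME ks. set ks = I \<and> distinct ks"
  have "\<exists>ks. set ks = I \<and> distinct ks" using assms(1) by (rule finite_distinct_list)
  then have "set ?ks = I \<and> distinct ?ks" by (rule someI_ex)
  then have ks: "set ?ks = I" "distinct ?ks" by blast+
  define xs where "xs = map (\<lambda>i. (l i, s i)) ?ks"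
  have "rec_of I l s = recl xs" by (simp add: rec_of_def xs_def)
  moreover have "\<forall>(l, s)\<in>set xs. tp s" using ks(1) assms(3) by (auto simp: xs_def)
  moreover have "distinct (map fst xs)"
    using ks assms(2) by (simp add: xs_def comp_def distinct_map)
  moreover have "map_of xs = field_map I l s"
    using map_of_eq_field_map[OF ks(2)] ks(1) assms(2) by (simp add: xs_def)
  ultimately show ?thesis by (rule that)
qed

lemma rt_eqt_rec_of:
  assumes "rt \<rho>"
  shows "\<exists>(K :: nat set) (l :: nat \<Rightarrow> 'l) (s :: nat \<Rightarrow> ('a, 'l) ty).
    finite K \<and> inj_on l K \<and> (\<forall>k\<in>K. tp (s k)) \<and> eqt \<rho> (rec_of K l s)"
proof -
  obtain zs where zs: "\<forall>(l, s)\<in>set zs. tp s" "distinct (map fst zs)" "eqt \<rho> (recl zs)"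
    using rt_eqt_recl[OF assms] by blast
  define K where "K = {..<length zs}"
  define l where "l = (!) (map fst zs)"
  define s where "s = (!) (map snd zs)"
  have inj: "inj_on l K" unfolding l_def K_def using zs(2) by (simp add: inj_on_nth)
  have tp_s: "\<forall>k\<in>K. tp (s k)"
  proof
    fix k assume "k \<in> K"
    obtain l' t where "zs ! k = (l', t)" by (cases "zs ! k")
    moreover have "zs ! k \<in> set zs" using \<open>k \<in> K\<close> by (simp add: K_def)
    ultimately show "tp (s k)" using zs(1) \<open>k \<in> K\<close> by (auto simp: K_def s_def)
  qed
  have "zs = map (\<lambda>i. (l i, s i)) [0..<length zs]"
    by (rule nth_equalityI) (simp_all add: l_def s_def)
  also have "map_of \<dots> = field_map K l s"
    using inj by (simp add: map_of_eq_field_map K_def atLeast_upt)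
  finally have zs_field_map: "map_of zs = field_map K l s" .
  obtain xs where xs: "rec_of K l s = recl xs" "\<forall>(l, s)\<in>set xs. tp s"
      "distinct (map fst xs)" "map_of xs = field_map K l s"
    using rec_of_eq_recl[OF _ inj tp_s] by (auto simp: K_def)
  have "eqt \<rho> (rec_of K l s)"
    using zs(3) recl_eqt[OF zs(1) xs(2) zs(2) xs(3)] zs_field_map xs by (auto intro: eqt_trans)
  with inj tp_s show ?thesis unfolding K_def by blast
qed

context
  fixes I J :: "'i set" and l :: "'i \<Rightarrow> 'l" and \<sigma> \<tau> :: "'i \<Rightarrow> ('a, 'l) ty"
  assumes finite: "finite I" "finite J" and inj: "inj_on l (I \<union> J)"
    and tp_\<sigma>: "\<forall>i\<in>I. tp (\<sigma> i)" and tp_\<tau>: "\<forall>j\<in>J. tp (\<tau> j)"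
begin

lemma rec_of_pair_eq_recl:
  obtains xs ys where "rec_of I l \<sigma> = recl xs" "rec_of J l \<tau> = recl ys"
    "\<forall>(l, s)\<in>set xs. tp s" "\<forall>(l, s)\<in>set ys. tp s"
    "distinct (map fst xs)" "distinct (map fst ys)"
    "map_of xs = field_map I l \<sigma>" "map_of ys = field_map J l \<tau>"
proof -
  have "inj_on l I" "inj_on l J" using inj by (auto intro: inj_on_subset)
  obtain xs where xs: "rec_of I l \<sigma> = recl xs" "\<forall>(l, s)\<in>set xs. tp s"
      "distinct (map fst xs)" "map_of xs = field_map I l \<sigma>"
    using rec_of_eq_recl[OF finite(1) \<open>inj_on l I\<close> tp_\<sigma>] .
  obtain ys where ys: "rec_of J l \<tau> = recl ys" "\<forall>(l, s)\<in>set ys. tp s"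
      "distinct (map fst ys)" "map_of ys = field_map J l \<tau>"
    using rec_of_eq_recl[OF finite(2) \<open>inj_on l J\<close> tp_\<tau>] .
  show ?thesis by (rule that[OF xs(1) ys(1) xs(2) ys(2) xs(3) ys(3) xs(4) ys(4)])
qed

lemma rec_of_le_rec_of_iff:
  "sub (rec_of I l \<sigma>) (rec_of J l \<tau>) \<longleftrightarrow> J \<subseteq> I \<and> (\<forall>j\<in>J. sub (\<sigma> j) (\<tau> j))"
proof -
  obtain xs ys where "rec_of I l \<sigma> = recl xs" "rec_of J l \<tau> = recl ys"
    "\<forall>(l, s)\<in>set xs. tp s" "distinct (map fst xs)" "distinct (map fst ys)"
    "map_of xs = field_map I l \<sigma>" "map_of ys = field_map J l \<tau>"
    by (rule rec_of_pair_eq_recl)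
  then show ?thesis by (simp add: recl_le_recl_iff fields_le_field_map_iff[OF inj])
qed

lemma rec_of_Inter_eqt:
  "eqt (Inter (rec_of I l \<sigma>) (rec_of J l \<tau>))
    (rec_of (I \<union> J) l
      (\<lambda>k. if k \<in> I - J then \<sigma> k else if k \<in> J - I then \<tau> k else Inter (\<sigma> k) (\<tau> k)))"
  (is "eqt _ (rec_of _ _ ?\<kappa>)")
proof -
  obtain xs ys where xs: "rec_of I l \<sigma> = recl xs" "\<forall>(l, s)\<in>set xs. tp s"
      "distinct (map fst xs)" "map_of xs = field_map I l \<sigma>"
    and ys: "rec_of J l \<tau> = recl ys" "\<forall>(l, s)\<in>set ys. tp s"
      "distinct (map fst ys)" "map_of ys = field_map J l \<tau>"
    by (rule rec_of_pair_eq_recl)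
  have fin_tp: "finite (I \<union> J)" "\<forall>k\<in>I \<union> J. tp (?\<kappa> k)"
    using finite tp_\<sigma> tp_\<tau> by (auto intro: tp_inter)
  obtain zs where zs: "rec_of (I \<union> J) l ?\<kappa> = recl zs" "\<forall>(l, s)\<in>set zs. tp s"
      "distinct (map fst zs)" "map_of zs = field_map (I \<union> J) l ?\<kappa>"
    using rec_of_eq_recl[OF fin_tp(1) inj fin_tp(2)] .
  have "map_of zs = map_inter (map_of xs) (map_of ys)"
    by (simp add: zs(4) xs(4) ys(4) map_inter_field_map[OF inj])
  then show ?thesis
    unfolding xs(1) ys(1) zs(1) by (rule recl_Inter[OF xs(2) ys(2) zs(2) xs(3) ys(3) zs(3)])
qed

lemma rec_of_RPlus_eqt:
  "eqt (RPlus (rec_of I l \<sigma>) (rec_of J l \<tau>)) (rec_of (I \<union> J) l (\<lambda>k. if k \<in> J then \<tau> k else \<sigma> k))"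
  (is "eqt _ (rec_of _ _ ?\<pi>)")
proof -
  obtain xs ys where xs: "rec_of I l \<sigma> = recl xs" "\<forall>(l, s)\<in>set xs. tp s"
      "distinct (map fst xs)" "map_of xs = field_map I l \<sigma>"
    and ys: "rec_of J l \<tau> = recl ys" "\<forall>(l, s)\<in>set ys. tp s"
      "distinct (map fst ys)" "map_of ys = field_map J l \<tau>"
    by (rule rec_of_pair_eq_recl)
  have fin_tp: "finite (I \<union> J)" "\<forall>k\<in>I \<union> J. tp (?\<pi> k)"
    using finite tp_\<sigma> tp_\<tau> by auto
  obtain zs where zs: "rec_of (I \<union> J) l ?\<pi> = recl zs" "\<forall>(l, s)\<in>set zs. tp s"
      "distinct (map fst zs)" "map_of zs = field_map (I \<union> J) l ?\<pi>"
    using rec_of_eq_recl[OF fin_tp(1) inj fin_tp(2)] .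
  have "map_of zs = map_of xs ++ map_of ys"
    by (simp add: zs(4) xs(4) ys(4) map_add_field_map[OF inj])
  then show ?thesis
    unfolding xs(1) ys(1) zs(1) by (rule recl_RPlus[OF xs(2) ys(2) zs(2) xs(3) ys(3) zs(3)])
qed

end

theorem lemma3p7:
  fixes I J :: "'i set" and l :: "'i \<Rightarrow> 'l"
    and \<sigma> \<tau> :: "'i \<Rightarrow> ('a, 'l) ty"
  assumes "finite I" and "finite J"
    and "inj_on l (I \<union> J)"
    and "\<forall>i\<in>I. tp (\<sigma> i)" and "\<forall>j\<in>J. tp (\<tau> j)"
  shows "(sub (rec_of I l \<sigma>) (rec_of J l \<tau>) \<longleftrightarrow> J \<subseteq> I \<and> (\<forall>j\<in>J. sub (\<sigma> j) (\<tau> j)))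
    \<and> eqt (Inter (rec_of I l \<sigma>) (rec_of J l \<tau>))
          (rec_of (I \<union> J) l (\<lambda>k. if k \<in> I - J then \<sigma> k
                                 else if k \<in> J - I then \<tau> k
                                 else Inter (\<sigma> k) (\<tau> k)))
    \<and> eqt (RPlus (rec_of I l \<sigma>) (rec_of J l \<tau>))
          (rec_of ((I - J) \<union> J) l (\<lambda>k. if k \<in> J then \<tau> k else \<sigma> k))
    \<and> (\<forall>\<rho> :: ('a, 'l) ty. rt \<rho> \<longrightarrow>
         (\<exists>(K :: nat set) (l' :: nat \<Rightarrow> 'l) (s :: nat \<Rightarrow> ('a, 'l) ty).
            finite K \<and> inj_on l' K \<and> (\<forall>k\<in>K. tp (s k)) \<and> eqt \<rho> (rec_of K l' s)))"
proof -
  have "(I - J) \<union> J = I \<union> J" by blast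
  then show ?thesis
    using rec_of_le_rec_of_iff[OF assms] rec_of_Inter_eqt[OF assms] rec_of_RPlus_eqt[OF assms]
      rt_eqt_rec_of
    by (simp only:) blast
qed

end
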